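(* Fix integers $M>N\geq1$, positive reals $P_1,P_2,P_r,d_{d1},d_{d2},d_{r1},d_{r2},d_{dr},\alpha$, and weights $\mu_1\in[0,1]$, $\mu_2=1-\mu_1$. With $\mathcal C(x)=\log(1+x)$ define, for $Q_1,Q_2>0$, $I_1=\mathcal{C}\big(\tfrac{P_1(M-N)}{d_{d1}^{\alpha}}+\tfrac{P_1}{(d_{r1}^{\alpha}/N)+Q_1}\big)$, $I_2=\mathcal{C}\big(\tfrac{P_1(M-N)}{d_{d1}^{\alpha}}\big)+\zeta$, $I_3=\mathcal{C}\big(\tfrac{P_2(M-N)}{d_{d2}^{\alpha}}+\tfrac{P_2}{(d_{r2}^{\alpha}/N)+Q_2}\big)$, $I_4=\mathcal{C}\big(\tfrac{P_2(M-N)}{d_{d2}^{\alpha}}\big)+\zeta$, $I_5=\mathcal{C}\big(\tfrac{P_1(M-N)}{d_{d1}^{\alpha}}\big)+\mathcal{C}\big(\tfrac{P_2(M-N)}{d_{d2}^{\alpha}}\big)+\zeta$, where $\zeta=N\mathcal{C}\big(\tfrac{P_r(M-N)}{Nd_{dr}^{\alpha}}\big)-\mathcal{C}\big(\tfrac{d_{r1}^{\alpha}}{NQ_1}\big)-\mathcal{C}\big(\tfrac{d_{r2}^{\alpha}}{NQ_2}\big)$. Consider the problem $$\max_{R_1,R_2,Q_1,Q_2}\ \mu_1R_1+\mu_2R_2\quad\text{s.t. } R_1\le\min\{I_1,I_2\},\ R_2\le\min\{I_3,I_4\},\ R_1+R_2\le I_5,\ Q_1\ge0,\ Q_2\ge0.$$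 Let $a_k=1+\frac{P_k(M-N)}{d_{dk}^{\alpha}}$, $\lambda_s=\big(1+\frac{P_r(M-N)}{Nd_{dr}^{\alpha}}\big)^N$, $A=\mu_2P_2(d_{r1}^{\alpha}/N)a_1$, $B=(\mu_1-\mu_2)P_1P_2$, $C=-\mu_1P_1(d_{r2}^{\alpha}/N)a_2\lambda_s$, $\lambda_o=(2A)^{-1}(B+\sqrt{B^2-4AC})$, $\lambda_1^*=\min\{\max\{\lambda_o,1\},\lambda_s\}$ (i.e. $\lambda_1^*=1$ if $\lambda_o<1$ and $\lambda_1^*=\lambda_s$ if $\lambda_o>\lambda_s$), and $\lambda_2^*=\lambda_s/\lambda_1^*$. Then optimal quantization noise variances for this problem are $$Q_k^*=\frac{(d_{rk}^{\alpha}/N)\,a_k+P_k}{a_k(\lambda_k^*-1)},\qquad k\in\{1,2\}.$$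
   Context: When $\lambda_k^*=1$ the formula gives $Q_k^*=+\infty$, meaning that the data stream of user $k$ is not quantized/forwarded; in that case the expressions involving $Q_k$ are understood as their limits as $Q_k\to\infty$ (i.e. $\frac{P_k}{(d_{rk}^\alpha/N)+Q_k}\to0$ and $\mathcal C(\frac{d_{rk}^\alpha}{NQ_k})\to0$), and optimality is in the sense of the supremum of the problem. These quantities arise as the achievable rate region of quantize-forward relaying with joint decoding in a massive MIMO heterogeneous network with two users, relay (small-cell base station, $N$ antennas) and destination (macro-cell base station, $M$ antennas). *)

theory Defs
  imports "HOL-Analysis.Analysis"
begin

text \<open>Capacity function C(x) = log(1+x) (natural logarithm; the base only rescales
  all rates by a common positive constant).\<close>
definition Cf :: "real \<Rightarrow> real" where
  "Cf x = ln (1 + x)"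

text \<open>The term P_k / ((d_rk^alpha / N) + Q_k), with its limit 0 at Q_k = +infinity.
  Argument dra stands for d_rk^alpha, Nr for N.\<close>
definition relay_term :: "real \<Rightarrow> real \<Rightarrow> real \<Rightarrow> ereal \<Rightarrow> real" where
  "relay_term P dra Nr Q = (if Q = \<infinity> then 0 else P / (dra / Nr + real_of_ereal Q))"

definition quant_pen :: "real \<Rightarrow> real \<Rightarrow> ereal \<Rightarrow> real" where
  "quant_pen dra Nr Q = (if Q = \<infinity> then 0 else Cf (dra / (Nr * real_of_ereal Q)))"

text \<open>Optimal value of the weighted sum-rate problem over (R1,R2) for fixed (Q1,Q2)
  (supremum in the extended reals; -infinity if infeasible).\<close>
definition qf_value ::
  "nat \<Rightarrow> nat \<Rightarrow> real \<Rightarrow> real \<Rightarrow> real \<Rightarrow> real \<Rightarrow> real \<Rightarrow> real \<Rightarrow> real \<Rightarrow> real \<Rightarrow> real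
   \<Rightarrow> real \<Rightarrow> ereal \<Rightarrow> ereal \<Rightarrow> ereal" where
  "qf_value M N P1 P2 Pr dd1 dd2 dr1 dr2 ddr \<alpha> \<mu>1 Q1 Q2 =
    (let Nr = real N; K = real M - real N; \<mu>2 = 1 - \<mu>1;
         \<zeta> = Nr * Cf (Pr * K / (Nr * ddr powr \<alpha>))
             - quant_pen (dr1 powr \<alpha>) Nr Q1 - quant_pen (dr2 powr \<alpha>) Nr Q2;
         I1 = Cf (P1 * K / dd1 powr \<alpha> + relay_term P1 (dr1 powr \<alpha>) Nr Q1);
         I2 = Cf (P1 * K / dd1 powr \<alpha>) + \<zeta>;
         I3 = Cf (P2 * K / dd2 powr \<alpha> + relay_term P2 (dr2 powr \<alpha>) Nr Q2);
         I4 = Cf (P2 * K / dd2 powr \<alpha>) + \<zeta>;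
         I5 = Cf (P1 * K / dd1 powr \<alpha>) + Cf (P2 * K / dd2 powr \<alpha>) + \<zeta>
     in SUP R \<in> {(R1, R2). R1 \<le> min I1 I2 \<and> R2 \<le> min I3 I4 \<and> R1 + R2 \<le> I5}.
          ereal (\<mu>1 * fst R + \<mu>2 * snd R))"

text \<open>lambda_1^*. Convention: when A = 0 (i.e. mu_1 = 1) the expression lambda_o = (2A)^{-1}(...)
  is read as +infinity, so lambda_1^* = lambda_s.\<close>
definition lambda1_star ::
  "nat \<Rightarrow> nat \<Rightarrow> real \<Rightarrow> real \<Rightarrow> real \<Rightarrow> real \<Rightarrow> real \<Rightarrow> real \<Rightarrow> real \<Rightarrow> real \<Rightarrow> real
   \<Rightarrow> real \<Rightarrow> real" where
  "lambda1_star M N P1 P2 Pr dd1 dd2 dr1 dr2 ddr \<alpha> \<mu>1 =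
    (let Nr = real N; K = real M - real N; \<mu>2 = 1 - \<mu>1;
         a1 = 1 + P1 * K / dd1 powr \<alpha>; a2 = 1 + P2 * K / dd2 powr \<alpha>;
         lams = (1 + Pr * K / (Nr * ddr powr \<alpha>)) ^ N;
         A = \<mu>2 * P2 * (dr1 powr \<alpha> / Nr) * a1;
         B = (\<mu>1 - \<mu>2) * P1 * P2;
         C = - \<mu>1 * P1 * (dr2 powr \<alpha> / Nr) * a2 * lams;
         lamo = inverse (2 * A) * (B + sqrt (B\<^sup>2 - 4 * A * C))
     in if A = 0 then lams else min (max lamo 1) lams)"

definition lambda_s :: "nat \<Rightarrow> nat \<Rightarrow> real \<Rightarrow> real \<Rightarrow> real \<Rightarrow> real" where
  "lambda_s M N Pr ddr \<alpha> = (1 + Pr * (real M - real N) / (real N * ddr powr \<alpha>)) ^ N"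

definition Q_star :: "nat \<Rightarrow> nat \<Rightarrow> real \<Rightarrow> real \<Rightarrow> real \<Rightarrow> real \<Rightarrow> real \<Rightarrow> ereal" where
  "Q_star M N P dd dr \<alpha> lam =
    (let a = 1 + P * (real M - real N) / dd powr \<alpha>
     in if lam = 1 then \<infinity> else ereal ((dr powr \<alpha> / real N * a + P) / (a * (lam - 1))))"

end

theory Submission
  imports Defs
begin

text \<open>
  Substitute \<open>v\<^sub>k = Q\<^sub>k / (b\<^sub>k + Q\<^sub>k) \<in> (0, 1]\<close> with \<open>b\<^sub>k = d\<^sub>r\<^sub>k\<^sup>\<alpha> / N\<close>
  (\<open>v\<^sub>k = 1\<close> for \<open>Q\<^sub>k = \<infinity>\<close>). The relay term becomes \<open>P\<^sub>k / b\<^sub>k \<cdot> (1 - v\<^sub>k)\<close> and the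
  quantisation penalty \<open>-ln v\<^sub>k\<close>, so for fixed \<open>v\<close> the problem is a linear program over a
  pentagon whose five right-hand sides are concave in \<open>v\<close>. Weak duality with Lagrange
  multipliers for the five constraints, combined with the tangent inequality
  \<open>ln x \<le> x - 1\<close> in each \<open>v\<^sub>k\<close>, bounds the objective for every \<open>v\<close> by its value at
  \<open>v\<^sub>k = (P\<^sub>k + b\<^sub>k a\<^sub>k) / (P\<^sub>k + b\<^sub>k a\<^sub>k \<lambda>\<^sub>k)\<close>, which is exactly the ratio of \<open>Q\<^sub>k\<^sup>*\<close>.
  Suitable multipliers exist precisely when the split \<open>\<lambda>\<^sub>1 \<lambda>\<^sub>2 = \<lambda>\<^sub>s\<close> balances the weighted
  marginal gains \<open>\<mu>\<^sub>k P\<^sub>k / (P\<^sub>k + b\<^sub>k a\<^sub>k \<lambda>\<^sub>k)\<close>; at \<open>x = \<lambda>\<^sub>1\<close> the sign of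
  \<open>A x\<^sup>2 - B x + C\<close> is the sign of their difference, which is why \<open>\<lambda>\<^sub>1\<^sup>*\<close> is its larger root
  clipped to \<open>[1, \<lambda>\<^sub>s]\<close>. If \<open>\<lambda>\<^sub>k\<^sup>* = 1\<close> the optimal \<open>v\<^sub>k = 1\<close> needs \<open>Q\<^sub>k = \<infinity>\<close>; finite
  \<open>Q\<close> reach the value only in the limit.
\<close>

definition wsr_value :: "real \<Rightarrow> real \<Rightarrow> real \<Rightarrow> real \<Rightarrow> real \<Rightarrow> real \<Rightarrow> ereal" where
  "wsr_value \<mu>1 I1 I2 I3 I4 I5 =
    (SUP R \<in> {(R1, R2). R1 \<le> min I1 I2 \<and> R2 \<le> min I3 I4 \<and> R1 + R2 \<le> I5}.
       ereal (\<mu>1 * fst R + (1 - \<mu>1) * snd R))"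

lemma wsr_value_le:
  assumes "\<And>R1 R2. R1 \<le> min I1 I2 \<Longrightarrow> R2 \<le> min I3 I4 \<Longrightarrow> R1 + R2 \<le> I5 \<Longrightarrow>
             \<mu>1 * R1 + (1 - \<mu>1) * R2 \<le> V"
  shows "wsr_value \<mu>1 I1 I2 I3 I4 I5 \<le> ereal V"
  unfolding wsr_value_def using assms by (auto intro!: SUP_least)

lemma wsr_value_ge:
  assumes "R1 \<le> min I1 I2" "R2 \<le> min I3 I4" "R1 + R2 \<le> I5"
  shows "ereal (\<mu>1 * R1 + (1 - \<mu>1) * R2) \<le> wsr_value \<mu>1 I1 I2 I3 I4 I5"
  unfolding wsr_value_def using assms by (intro SUP_upper2[of "(R1, R2)"]) auto

definition quant_ratio :: "real \<Rightarrow> ereal \<Rightarrow> real" where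
  "quant_ratio b Q = (if Q = \<infinity> then 1 else real_of_ereal Q / (b + real_of_ereal Q))"

lemma relay_term_eq_quant_ratio:
  assumes "0 < dra" "0 < Nr" "0 < Q"
  shows "relay_term P dra Nr Q = P / (dra / Nr) * (1 - quant_ratio (dra / Nr) Q)"
proof (cases Q)
  case (real q)
  define b where "b = dra / Nr"
  from assms real have "0 < q" "0 < b" by (simp_all add: b_def)
  then have "P / b * (1 - q / (b + q)) = P / (b + q)" by (simp add: field_simps)
  then show ?thesis using real by (simp add: relay_term_def quant_ratio_def b_def)
qed (use assms in \<open>auto simp: relay_term_def quant_ratio_def\<close>)

lemma quant_pen_eq_quant_ratio:
  assumes "0 < dra" "0 < Nr" "0 < Q"
  shows "quant_pen dra Nr Q = - ln (quant_ratio (dra / Nr) Q)"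
proof (cases Q)
  case (real q)
  define b where "b = dra / Nr"
  from assms real have "0 < q" "0 < b" by (simp_all add: b_def)
  then have "1 + b / q = (b + q) / q" by (simp add: field_simps)
  with \<open>0 < q\<close> \<open>0 < b\<close> have "ln (1 + b / q) = - ln (q / (b + q))" by (simp add: ln_div)
  then show ?thesis using real by (simp add: quant_pen_def quant_ratio_def Cf_def b_def)
qed (use assms in \<open>auto simp: quant_pen_def quant_ratio_def\<close>)

lemma quant_ratio_image:
  assumes "0 < b"
  shows "(\<lambda>q. quant_ratio b (ereal q)) ` {0<..} = {0<..<1}"
proof
  show "(\<lambda>q. quant_ratio b (ereal q)) ` {0<..} \<subseteq> {0<..<1}"
    using assms by (auto simp: quant_ratio_def)
  show "{0<..<1} \<subseteq> (\<lambda>q. quant_ratio b (ereal q)) ` {0<..}"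
  proof
    fix v :: real assume v: "v \<in> {0<..<1}"
    then have "quant_ratio b (ereal (b * v / (1 - v))) = v" "0 < b * v / (1 - v)"
      using assms by (auto simp: quant_ratio_def field_simps)
    then show "v \<in> (\<lambda>q. quant_ratio b (ereal q)) ` {0<..}"
      by (metis greaterThan_iff image_eqI)
  qed
qed

lemma qf_value_eq_wsr_value:
  fixes M N :: nat and P1 P2 Pr dd1 dd2 dr1 dr2 ddr \<alpha> \<mu>1 :: real
  assumes "1 \<le> N" "0 < dr1" "0 < dr2" "0 < Q1" "0 < Q2"
    and "a1 = 1 + P1 * (real M - real N) / dd1 powr \<alpha>"
    and "a2 = 1 + P2 * (real M - real N) / dd2 powr \<alpha>"
    and "b1 = dr1 powr \<alpha> / real N" "b2 = dr2 powr \<alpha> / real N"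
    and "L = real N * Cf (Pr * (real M - real N) / (real N * ddr powr \<alpha>))"
    and "v1 = quant_ratio b1 Q1" "v2 = quant_ratio b2 Q2"
  shows "qf_value M N P1 P2 Pr dd1 dd2 dr1 dr2 ddr \<alpha> \<mu>1 Q1 Q2 =
    wsr_value \<mu>1 (ln (a1 + P1 / b1 * (1 - v1))) (ln a1 + (L + ln v1 + ln v2))
      (ln (a2 + P2 / b2 * (1 - v2))) (ln a2 + (L + ln v1 + ln v2))
      (ln a1 + ln a2 + (L + ln v1 + ln v2))"
  using assms
  by (simp add: qf_value_def wsr_value_def Let_def Cf_def add.assoc
      relay_term_eq_quant_ratio quant_pen_eq_quant_ratio)

definition opt_ratio :: "real \<Rightarrow> real \<Rightarrow> real \<Rightarrow> real \<Rightarrow> real" where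
  "opt_ratio a b P lam = (P + b * a) / (P + b * a * lam)"

lemma opt_ratio_bounds:
  assumes "0 < a" "0 < b" "0 < P" "1 \<le> lam"
  shows "0 < opt_ratio a b P lam" "opt_ratio a b P lam \<le> 1" "1 \<le> lam * opt_ratio a b P lam"
proof -
  have "0 < b * a" "b * a \<le> b * a * lam" "P \<le> P * lam" using assms by simp_all
  then have "0 < P + b * a" "0 < P + b * a * lam" using assms by linarith+
  then show "0 < opt_ratio a b P lam" unfolding opt_ratio_def by simp
  show "opt_ratio a b P lam \<le> 1"
    using \<open>b * a \<le> b * a * lam\<close> \<open>0 < P + b * a * lam\<close> by (simp add: opt_ratio_def)
  show "1 \<le> lam * opt_ratio a b P lam"
    using \<open>P \<le> P * lam\<close> \<open>0 < P + b * a * lam\<close> by (simp add: opt_ratio_def algebra_simps)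
qed

lemma relay_gain_opt_ratio:
  assumes "0 < a" "0 < b" "0 < P" "1 \<le> lam"
  shows "a + P / b * (1 - opt_ratio a b P lam) = a * lam * opt_ratio a b P lam"
proof -
  have E: "0 < P + b * a * lam" using assms by (simp add: add_pos_pos)
  then have "1 - opt_ratio a b P lam = b * a * (lam - 1) / (P + b * a * lam)"
    by (simp add: opt_ratio_def field_simps)
  then have "P / b * (1 - opt_ratio a b P lam) = P * a * (lam - 1) / (P + b * a * lam)"
    using assms by simp
  with E show ?thesis by (simp add: opt_ratio_def field_simps)
qed

lemma Q_star_quant_ratio:
  assumes "0 < a" "0 < b" "0 < P" "1 \<le> lam"
    and "a = 1 + P * (real M - real N) / dd powr \<alpha>" "b = dr powr \<alpha> / real N"
  shows "0 < Q_star M N P dd dr \<alpha> lam"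
    and "quant_ratio b (Q_star M N P dd dr \<alpha> lam) = opt_ratio a b P lam"
proof -
  have Q: "Q_star M N P dd dr \<alpha> lam
      = (if lam = 1 then \<infinity> else ereal ((b * a + P) / (a * (lam - 1))))"
    using assms(5,6) by (simp add: Q_star_def Let_def)
  have "0 < b * a" using assms(1,2) by simp
  then show "0 < Q_star M N P dd dr \<alpha> lam"
    using assms(1-4) by (simp add: Q add_pos_pos)
  show "quant_ratio b (Q_star M N P dd dr \<alpha> lam) = opt_ratio a b P lam"
  proof (cases "lam = 1")
    case False
    define X where "X = a * (lam - 1)"
    have "0 < X" using False assms by (simp add: X_def)
    moreover have "0 < b * X + (b * a + P)"
      using \<open>0 < X\<close> \<open>0 < b * a\<close> assms(1-4) by (simp add: add_pos_pos)
    moreover have "b + (b * a + P) / X = (b * X + (b * a + P)) / X"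
      using \<open>0 < X\<close> by (simp add: field_simps)
    ultimately have "(b * a + P) / X / (b + (b * a + P) / X) = (b * a + P) / (b * X + (b * a + P))"
      by simp
    also have "\<dots> = opt_ratio a b P lam"
      by (simp add: X_def opt_ratio_def algebra_simps)
    finally have "(b * a + P) / (a * (lam - 1)) / (b + (b * a + P) / (a * (lam - 1)))
        = opt_ratio a b P lam"
      by (simp add: X_def)
    then show ?thesis using False by (simp add: Q quant_ratio_def)
  next
    case True
    then have "Q_star M N P dd dr \<alpha> lam = \<infinity>" using Q by simp
    moreover have "0 < P + b * a" using \<open>0 < b * a\<close> assms(3) by simp
    ultimately show ?thesis using True by (simp add: quant_ratio_def opt_ratio_def)
  qed
qed

lemma opt_ratio_maximizes:
  fixes a b P lam y W v :: real
  assumes "0 < a" "0 < b" "0 < P" "1 \<le> lam" "0 \<le> y" "0 \<le> W" "0 < v" "v \<le> 1"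
    and stationary: "W * a * b * lam = y * P \<or> (lam = 1 \<and> y * P \<le> W * a * b * lam)"
  defines "s \<equiv> opt_ratio a b P lam"
  shows "y * ln (a + P / b * (1 - v)) + W * ln v \<le> y * ln (a + P / b * (1 - s)) + W * ln s"
proof -
  define X where "X = a + P / b * (1 - v)"
  define Xs where "Xs = a + P / b * (1 - s)"
  have s: "0 < s" "s \<le> 1" using opt_ratio_bounds[OF assms(1-4)] by (simp_all add: s_def)
  have Xs_eq: "Xs = a * lam * s"
    using relay_gain_opt_ratio[OF assms(1-4)] by (simp add: Xs_def s_def)
  have "0 < X" using assms by (simp add: X_def add_pos_nonneg)
  have "0 < Xs" using s assms by (simp add: Xs_eq)
  have tangent: "y * (ln X - ln Xs) + W * (ln v - ln s) \<le> y * (X / Xs - 1) + W * (v / s - 1)"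
    using ln_le_minus_one[of "X / Xs"] ln_le_minus_one[of "v / s"] \<open>0 < X\<close> \<open>0 < Xs\<close> s assms
    by (intro add_mono mult_left_mono) (simp_all add: ln_div)
  have "X - Xs = P / b * (s - v)" using assms by (simp add: X_def Xs_def field_simps)
  moreover have "X / Xs - 1 = (X - Xs) / Xs" "v / s - 1 = (v - s) / s"
    using \<open>0 < Xs\<close> s by (simp_all add: diff_divide_distrib)
  ultimately have "y * (X / Xs - 1) + W * (v / s - 1)
      = y * (P / b * (s - v) / (a * lam * s)) + W * ((v - s) / s)"
    by (simp add: Xs_eq)
  also have "\<dots> = (v - s) * (W * a * b * lam - y * P) / (s * a * b * lam)"
    using s assms by (simp add: field_simps)
  also have "\<dots> \<le> 0"
  proof -
    have "(v - s) * (W * a * b * lam - y * P) \<le> 0"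
    proof (cases "W * a * b * lam = y * P")
      case False
      with stationary have "lam = 1" "y * P \<le> W * a * b * lam" by auto
      moreover have "0 < P + b * a" using assms by (simp add: add_pos_pos)
      ultimately have "s = 1" by (simp add: s_def opt_ratio_def)
      with \<open>v \<le> 1\<close> \<open>y * P \<le> W * a * b * lam\<close> show ?thesis by (simp add: mult_nonpos_nonneg)
    qed simp
    then show ?thesis using s assms by (simp add: divide_nonpos_pos)
  qed
  finally show ?thesis using tangent by (simp add: X_def Xs_def algebra_simps)
qed

lemma pentagon_weak_duality:
  fixes y1 y2 y3 y4 y5 R1 R2 :: real
  assumes "0 \<le> y1" "0 \<le> y2" "0 \<le> y3" "0 \<le> y4" "0 \<le> y5"
    and "y1 + y2 + y5 = \<mu>1" "y3 + y4 + y5 = \<mu>2"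
    and "R1 \<le> min I1 I2" "R2 \<le> min I3 I4" "R1 + R2 \<le> I5"
  shows "\<mu>1 * R1 + \<mu>2 * R2 \<le> y1 * I1 + y2 * I2 + y3 * I3 + y4 * I4 + y5 * I5"
proof -
  have "\<mu>1 * R1 + \<mu>2 * R2 = y1 * R1 + y2 * R1 + y3 * R2 + y4 * R2 + y5 * (R1 + R2)"
    using assms(6,7) by (auto simp: algebra_simps)
  also have "\<dots> \<le> y1 * I1 + y2 * I2 + y3 * I3 + y4 * I4 + y5 * I5"
    using assms by (intro add_mono mult_left_mono) auto
  finally show ?thesis .
qed

text \<open>\<open>y\<^sub>1, \<dots>, y\<^sub>5\<close> multiply the constraints \<open>R\<^sub>1 \<le> I\<^sub>1\<close>, \<open>R\<^sub>1 \<le> I\<^sub>2\<close>, \<open>R\<^sub>2 \<le> I\<^sub>3\<close>,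
  \<open>R\<^sub>2 \<le> I\<^sub>4\<close>, \<open>R\<^sub>1 + R\<^sub>2 \<le> I\<^sub>5\<close>. The two disjunctions are stationarity in \<open>v\<^sub>1\<close>, \<open>v\<^sub>2\<close>
  (see \<open>opt_ratio_maximizes\<close>, where \<open>W = y\<^sub>2 + y\<^sub>4 + y\<^sub>5\<close> is the weight of \<open>ln v\<^sub>k\<close>); the last
  line is complementary slackness, since at the optimum \<open>I\<^sub>2\<close> has slack \<open>ln (\<lambda>\<^sub>2 v\<^sub>2)\<close>, zero
  iff \<open>\<lambda>\<^sub>2 = 1\<close>, and symmetrically for \<open>I\<^sub>4\<close>.\<close>

definition kkt_multipliers ::
  "real \<Rightarrow> real \<Rightarrow> real \<Rightarrow> real \<Rightarrow> real \<Rightarrow> real \<Rightarrow> real \<Rightarrow> real \<Rightarrow> real \<Rightarrow> real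
   \<Rightarrow> real \<Rightarrow> real \<Rightarrow> real \<Rightarrow> real \<Rightarrow> real \<Rightarrow> bool" where
  "kkt_multipliers a1 a2 b1 b2 P1 P2 lam1 lam2 \<mu>1 \<mu>2 y1 y2 y3 y4 y5 \<longleftrightarrow>
     0 \<le> y1 \<and> 0 \<le> y2 \<and> 0 \<le> y3 \<and> 0 \<le> y4 \<and> 0 \<le> y5 \<and>
     y1 + y2 + y5 = \<mu>1 \<and> y3 + y4 + y5 = \<mu>2 \<and>
     ((y2 + y4 + y5) * a1 * b1 * lam1 = y1 * P1 \<or>
        (lam1 = 1 \<and> y1 * P1 \<le> (y2 + y4 + y5) * a1 * b1 * lam1)) \<and>
     ((y2 + y4 + y5) * a2 * b2 * lam2 = y3 * P2 \<or>
        (lam2 = 1 \<and> y3 * P2 \<le> (y2 + y4 + y5) * a2 * b2 * lam2)) \<and>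
     (y2 = 0 \<or> lam2 = 1) \<and> (y4 = 0 \<or> lam1 = 1)"

lemma kkt_multipliers_swap:
  "kkt_multipliers a1 a2 b1 b2 P1 P2 lam1 lam2 \<mu>1 \<mu>2 y1 y2 y3 y4 y5 \<longleftrightarrow>
   kkt_multipliers a2 a1 b2 b1 P2 P1 lam2 lam1 \<mu>2 \<mu>1 y3 y4 y1 y2 y5"
  unfolding kkt_multipliers_def by (auto simp: algebra_simps)

text \<open>A user may be held at \<open>\<lambda>\<^sub>k = 1\<close> only if the other user's weighted marginal gain
  \<open>\<mu>\<^sub>j P\<^sub>j / (P\<^sub>j + b\<^sub>j a\<^sub>j \<lambda>\<^sub>j)\<close> is at least as large; otherwise the two gains must agree.\<close>

definition kkt_balanced ::
  "real \<Rightarrow> real \<Rightarrow> real \<Rightarrow> real \<Rightarrow> real \<Rightarrow> real \<Rightarrow> real \<Rightarrow> real \<Rightarrow> real \<Rightarrow> real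
   \<Rightarrow> bool" where
  "kkt_balanced \<mu>1 \<mu>2 a1 a2 b1 b2 P1 P2 lam1 lam2 \<longleftrightarrow>
     (\<mu>1 * P1 * (P2 + b2 * a2 * lam2) \<le> \<mu>2 * P2 * (P1 + b1 * a1 * lam1) \<or> lam2 = 1) \<and>
     (\<mu>2 * P2 * (P1 + b1 * a1 * lam1) \<le> \<mu>1 * P1 * (P2 + b2 * a2 * lam2) \<or> lam1 = 1)"

lemma kkt_multipliers_exist_dominant:
  fixes a1 a2 b1 b2 P1 P2 lam1 lam2 \<mu>1 \<mu>2 :: real
  assumes "0 < a1" "0 < a2" "0 < b1" "0 < b2" "0 < P1" "0 < P2" "1 \<le> lam1" "1 \<le> lam2"
    and "0 \<le> \<mu>1" "0 \<le> \<mu>2"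
    and dominant: "\<mu>2 * P2 * (P1 + b1 * a1 * lam1) \<le> \<mu>1 * P1 * (P2 + b2 * a2 * lam2)"
    and balanced: "\<mu>1 * P1 * (P2 + b2 * a2 * lam2) \<le> \<mu>2 * P2 * (P1 + b1 * a1 * lam1) \<or> lam2 = 1"
  shows "\<exists>y1 y2 y3 y4 y5. kkt_multipliers a1 a2 b1 b2 P1 P2 lam1 lam2 \<mu>1 \<mu>2 y1 y2 y3 y4 y5"
proof -
  define E1 where "E1 = P1 + b1 * a1 * lam1"
  define E2 where "E2 = P2 + b2 * a2 * lam2"
  have "0 < E1" "0 < E2" using assms(1-8) by (simp_all add: E1_def E2_def add_pos_pos)
  define w where "w = \<mu>1 * P1 / E1"
  have wE1: "w * E1 = \<mu>1 * P1" using \<open>0 < E1\<close> by (simp add: w_def)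
  have "0 \<le> w" using assms \<open>0 < E1\<close> by (simp add: w_def)
  have "w * P1 \<le> w * E1"
    using \<open>0 \<le> w\<close> assms(1-8) by (intro mult_left_mono) (simp_all add: E1_def)
  then have "w \<le> \<mu>1" using wE1 \<open>0 < P1\<close> by simp
  have stat1: "w * a1 * b1 * lam1 = (\<mu>1 - w) * P1" using wE1 by (simp add: E1_def algebra_simps)
  have wE2: "w * E2 = \<mu>1 * P1 * E2 / E1" by (simp add: w_def)
  have "\<mu>2 * P2 \<le> w * E2"
    unfolding wE2 using dominant \<open>0 < E1\<close> by (simp add: pos_le_divide_eq E1_def E2_def)
  moreover have "w * E2 \<le> \<mu>2 * P2 \<or> lam2 = 1"
    unfolding wE2 using balanced \<open>0 < E1\<close> by (auto simp: pos_divide_le_eq E1_def E2_def)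
  ultimately have stat2: "w * a2 * b2 * lam2 = (\<mu>2 - w) * P2 \<or>
      (lam2 = 1 \<and> (\<mu>2 - w) * P2 \<le> w * a2 * b2 * lam2)"
    by (auto simp: E2_def algebra_simps)
  show ?thesis
  proof (cases "w \<le> \<mu>2")
    case True
    then have "kkt_multipliers a1 a2 b1 b2 P1 P2 lam1 lam2 \<mu>1 \<mu>2 (\<mu>1 - w) 0 (\<mu>2 - w) 0 w"
      using \<open>0 \<le> w\<close> \<open>w \<le> \<mu>1\<close> stat1 stat2 by (simp add: kkt_multipliers_def)
    then show ?thesis by blast
  next
    case False
    then have "\<mu>2 * P2 < w * P2" using \<open>0 < P2\<close> by simp
    also have "\<dots> \<le> w * E2"
      using \<open>0 \<le> w\<close> assms(2,4,8) by (intro mult_left_mono) (simp_all add: E2_def)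
    finally have "lam2 = 1" using \<open>w * E2 \<le> \<mu>2 * P2 \<or> lam2 = 1\<close> by linarith
    then have "kkt_multipliers a1 a2 b1 b2 P1 P2 lam1 lam2 \<mu>1 \<mu>2 (\<mu>1 - w) (w - \<mu>2) 0 0 \<mu>2"
      using False \<open>0 \<le> w\<close> \<open>w \<le> \<mu>1\<close> stat1 assms by (simp add: kkt_multipliers_def)
    then show ?thesis by blast
  qed
qed

lemma kkt_multipliers_exist:
  fixes a1 a2 b1 b2 P1 P2 lam1 lam2 \<mu>1 \<mu>2 :: real
  assumes "0 < a1" "0 < a2" "0 < b1" "0 < b2" "0 < P1" "0 < P2" "1 \<le> lam1" "1 \<le> lam2"
    and "0 \<le> \<mu>1" "0 \<le> \<mu>2"
    and "kkt_balanced \<mu>1 \<mu>2 a1 a2 b1 b2 P1 P2 lam1 lam2"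
  obtains y1 y2 y3 y4 y5 where "kkt_multipliers a1 a2 b1 b2 P1 P2 lam1 lam2 \<mu>1 \<mu>2 y1 y2 y3 y4 y5"
proof (cases "\<mu>2 * P2 * (P1 + b1 * a1 * lam1) \<le> \<mu>1 * P1 * (P2 + b2 * a2 * lam2)")
  case True
  moreover have "\<mu>1 * P1 * (P2 + b2 * a2 * lam2) \<le> \<mu>2 * P2 * (P1 + b1 * a1 * lam1) \<or> lam2 = 1"
    using assms(11) by (simp add: kkt_balanced_def)
  ultimately show ?thesis using kkt_multipliers_exist_dominant[OF assms(1-10)] that by blast
next
  case False
  then have "\<mu>1 * P1 * (P2 + b2 * a2 * lam2) \<le> \<mu>2 * P2 * (P1 + b1 * a1 * lam1)" by simp
  moreover have "\<mu>2 * P2 * (P1 + b1 * a1 * lam1) \<le> \<mu>1 * P1 * (P2 + b2 * a2 * lam2) \<or> lam1 = 1"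
    using assms(11) by (simp add: kkt_balanced_def)
  ultimately obtain y1 y2 y3 y4 y5
    where "kkt_multipliers a2 a1 b2 b1 P2 P1 lam2 lam1 \<mu>2 \<mu>1 y1 y2 y3 y4 y5"
    using kkt_multipliers_exist_dominant[of a2 a1 b2 b1 P2 P1 lam2 lam1 \<mu>2 \<mu>1] assms(1-10)
    by blast
  then show ?thesis using that kkt_multipliers_swap by blast
qed

lemma quadratic_larger_root_sign:
  fixes A B C r :: real
  assumes "0 < A" "C \<le> 0" and r: "r = inverse (2 * A) * (B + sqrt (B\<^sup>2 - 4 * A * C))"
  shows "A * r\<^sup>2 - B * r + C = 0"
    and "\<And>x. 0 \<le> x \<Longrightarrow> r \<le> x \<Longrightarrow> 0 \<le> A * x\<^sup>2 - B * x + C"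
    and "\<And>x. 0 \<le> x \<Longrightarrow> x \<le> r \<Longrightarrow> A * x\<^sup>2 - B * x + C \<le> 0"
proof -
  define d where "d = sqrt (B\<^sup>2 - 4 * A * C)"
  have "A * C \<le> 0" using assms by (simp add: mult_nonneg_nonpos)
  then have "B\<^sup>2 \<le> B\<^sup>2 - 4 * A * C" by (simp add: mult.assoc)
  then have "\<bar>B\<bar> \<le> d" unfolding d_def by (metis real_sqrt_abs real_sqrt_le_mono)
  have "d\<^sup>2 = B\<^sup>2 - 4 * A * C"
    using \<open>B\<^sup>2 \<le> _\<close> unfolding d_def by (smt (verit) real_sqrt_pow2 zero_le_power2)
  have r_d: "r = inverse (2 * A) * (B + d)" by (simp add: r d_def)
  define r' where "r' = inverse (2 * A) * (B - d)"
  have "r' \<le> 0" using \<open>\<bar>B\<bar> \<le> d\<close> \<open>0 < A\<close> by (simp add: r'_def mult_nonneg_nonpos)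
  have factor: "A * x\<^sup>2 - B * x + C = A * (x - r) * (x - r')" for x
  proof -
    have "A * (x - r) * (x - r') = A * x\<^sup>2 - B * x + (B\<^sup>2 - d\<^sup>2) / (4 * A)"
      using \<open>0 < A\<close> by (simp add: r_d r'_def field_simps power2_eq_square)
    also have "(B\<^sup>2 - d\<^sup>2) / (4 * A) = C" using \<open>d\<^sup>2 = _\<close> \<open>0 < A\<close> by simp
    finally show ?thesis ..
  qed
  show "A * r\<^sup>2 - B * r + C = 0" by (simp add: factor)
  show "0 \<le> A * x\<^sup>2 - B * x + C" if "0 \<le> x" "r \<le> x" for x
    using that \<open>r' \<le> 0\<close> \<open>0 < A\<close> by (simp add: factor)
  show "A * x\<^sup>2 - B * x + C \<le> 0" if "0 \<le> x" "x \<le> r" for x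
  proof -
    have "(x - r) * (x - r') \<le> 0" using that \<open>r' \<le> 0\<close> by (simp add: mult_nonpos_nonneg)
    then show ?thesis using \<open>0 < A\<close> by (simp add: factor mult.assoc mult_nonneg_nonpos)
  qed
qed

lemma kkt_balanced_clamped_root:
  fixes a1 a2 b1 b2 P1 P2 lams \<mu>1 A B C lam1 :: real
  assumes pos: "0 < a1" "0 < a2" "0 < b1" "0 < b2" "0 < P1" "0 < P2"
    and "1 \<le> lams" "0 \<le> \<mu>1" "\<mu>1 \<le> 1"
    and A: "A = (1 - \<mu>1) * P2 * b1 * a1" and B: "B = (\<mu>1 - (1 - \<mu>1)) * P1 * P2"
    and C: "C = - \<mu>1 * P1 * b2 * a2 * lams"
    and lam1: "lam1 = (if A = 0 then lams
                       else min (max (inverse (2 * A) * (B + sqrt (B\<^sup>2 - 4 * A * C))) 1) lams)"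
  shows "1 \<le> lam1" "lam1 \<le> lams" "kkt_balanced \<mu>1 (1 - \<mu>1) a1 a2 b1 b2 P1 P2 lam1 (lams / lam1)"
proof -
  show "1 \<le> lam1" "lam1 \<le> lams" using \<open>1 \<le> lams\<close> by (auto simp: lam1)
  define gap where
    "gap = (1 - \<mu>1) * P2 * (P1 + b1 * a1 * lam1) - \<mu>1 * P1 * (P2 + b2 * a2 * (lams / lam1))"
  have "0 < lam1" using \<open>1 \<le> lam1\<close> by simp
  have quadratic: "A * lam1\<^sup>2 - B * lam1 + C = lam1 * gap"
    using \<open>0 < lam1\<close> by (simp add: A B C gap_def field_simps power2_eq_square)
  have "(0 \<le> gap \<or> lam1 = lams) \<and> (gap \<le> 0 \<or> lam1 = 1)"
  proof (cases "A = 0")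
    case True
    then have "\<mu>1 = 1" using pos by (simp add: A)
    then show ?thesis using True pos \<open>1 \<le> lams\<close> by (simp add: lam1 gap_def)
  next
    case False
    then have "0 < A" using pos \<open>\<mu>1 \<le> 1\<close> by (simp add: A)
    have "C \<le> 0" using pos \<open>0 \<le> \<mu>1\<close> \<open>1 \<le> lams\<close> by (simp add: C)
    define r where "r = inverse (2 * A) * (B + sqrt (B\<^sup>2 - 4 * A * C))"
    note root = quadratic_larger_root_sign[OF \<open>0 < A\<close> \<open>C \<le> 0\<close> r_def]
    consider "r \<le> 1" | "lams \<le> r" | "1 < r" "r < lams" by linarith
    then show ?thesis
    proof cases
      case 1
      then have "lam1 = 1" using False \<open>1 \<le> lams\<close> by (simp add: lam1 r_def)
      then show ?thesis using root(2)[of 1] 1 quadratic by simp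
    next
      case 2
      then have "lam1 = lams" using False \<open>1 \<le> lams\<close> by (simp add: lam1 r_def)
      then show ?thesis using root(3)[of lams] 2 quadratic \<open>0 < lam1\<close>
        by (simp add: mult_le_0_iff)
    next
      case 3
      then have "lam1 = r" using False by (simp add: lam1 r_def)
      then show ?thesis using root(1) quadratic \<open>0 < lam1\<close> by simp
    qed
  qed
  moreover have "lams / lam1 = 1 \<longleftrightarrow> lam1 = lams" using \<open>0 < lam1\<close> by auto
  ultimately show "kkt_balanced \<mu>1 (1 - \<mu>1) a1 a2 b1 b2 P1 P2 lam1 (lams / lam1)"
    by (auto simp: kkt_balanced_def gap_def)
qed

text \<open>The fixed-\<open>v\<close> problem in the paper's notation: \<open>a\<^sub>k\<close>, \<open>b\<^sub>k = d\<^sub>r\<^sub>k\<^sup>\<alpha> / N\<close>, and a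
  split \<open>\<lambda>\<^sub>s = \<lambda>\<^sub>1 \<lambda>\<^sub>2\<close> of the relay gain, which enters \<open>\<zeta>\<close> as \<open>N C(\<dots>) = ln \<lambda>\<^sub>s\<close>.\<close>

locale qf_rate_problem =
  fixes a1 a2 b1 b2 P1 P2 lam1 lam2 \<mu>1 :: real
  assumes pos: "0 < a1" "0 < a2" "0 < b1" "0 < b2" "0 < P1" "0 < P2"
    and lam: "1 \<le> lam1" "1 \<le> lam2"
    and mu: "0 \<le> \<mu>1" "\<mu>1 \<le> 1"
    and balanced: "kkt_balanced \<mu>1 (1 - \<mu>1) a1 a2 b1 b2 P1 P2 lam1 lam2"
begin

definition rate :: "real \<Rightarrow> real \<Rightarrow> ereal" where
  "rate v1 v2 = wsr_value \<mu>1
     (ln (a1 + P1 / b1 * (1 - v1))) (ln a1 + (ln lam1 + ln lam2 + ln v1 + ln v2))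
     (ln (a2 + P2 / b2 * (1 - v2))) (ln a2 + (ln lam1 + ln lam2 + ln v1 + ln v2))
     (ln a1 + ln a2 + (ln lam1 + ln lam2 + ln v1 + ln v2))"

definition v1_opt :: real where "v1_opt = opt_ratio a1 b1 P1 lam1"
definition v2_opt :: real where "v2_opt = opt_ratio a2 b2 P2 lam2"

definition opt_value :: real where
  "opt_value = \<mu>1 * (ln a1 + ln lam1 + ln v1_opt) + (1 - \<mu>1) * (ln a2 + ln lam2 + ln v2_opt)"

lemma v_opt_bounds:
  "0 < v1_opt" "v1_opt \<le> 1" "1 \<le> lam1 * v1_opt" "0 < v2_opt" "v2_opt \<le> 1" "1 \<le> lam2 * v2_opt"
  using opt_ratio_bounds[OF pos(1,3,5) lam(1)] opt_ratio_bounds[OF pos(2,4,6) lam(2)]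
  by (simp_all add: v1_opt_def v2_opt_def)

lemma ln_relay_gain_v_opt:
  "ln (a1 + P1 / b1 * (1 - v1_opt)) = ln a1 + ln lam1 + ln v1_opt"
  "ln (a2 + P2 / b2 * (1 - v2_opt)) = ln a2 + ln lam2 + ln v2_opt"
  using relay_gain_opt_ratio[OF pos(1,3,5) lam(1)] relay_gain_opt_ratio[OF pos(2,4,6) lam(2)]
    pos v_opt_bounds lam
  by (simp_all add: v1_opt_def v2_opt_def ln_mult)

lemma ln_slack_nonneg: "0 \<le> ln lam1 + ln v1_opt" "0 \<le> ln lam2 + ln v2_opt"
proof -
  have "0 \<le> ln (lam1 * v1_opt)" "0 \<le> ln (lam2 * v2_opt)" using v_opt_bounds by simp_all
  then show "0 \<le> ln lam1 + ln v1_opt" "0 \<le> ln lam2 + ln v2_opt"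
    using v_opt_bounds lam by (simp_all add: ln_mult)
qed

lemma feasible_rates_le_opt_value:
  assumes "0 < v1" "v1 \<le> 1" "0 < v2" "v2 \<le> 1"
    and "R1 \<le> min (ln (a1 + P1 / b1 * (1 - v1))) (ln a1 + (ln lam1 + ln lam2 + ln v1 + ln v2))"
    and "R2 \<le> min (ln (a2 + P2 / b2 * (1 - v2))) (ln a2 + (ln lam1 + ln lam2 + ln v1 + ln v2))"
    and "R1 + R2 \<le> ln a1 + ln a2 + (ln lam1 + ln lam2 + ln v1 + ln v2)"
  shows "\<mu>1 * R1 + (1 - \<mu>1) * R2 \<le> opt_value"
proof -
  have "0 \<le> 1 - \<mu>1" using mu by simp
  then obtain y1 y2 y3 y4 y5
    where y: "kkt_multipliers a1 a2 b1 b2 P1 P2 lam1 lam2 \<mu>1 (1 - \<mu>1) y1 y2 y3 y4 y5"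
    using kkt_multipliers_exist[OF pos lam mu(1) _ balanced] by blast
  define W where "W = y2 + y4 + y5"
  define lagrangian where "lagrangian v1 v2 =
    y1 * ln (a1 + P1 / b1 * (1 - v1)) + y2 * (ln a1 + (ln lam1 + ln lam2 + ln v1 + ln v2))
    + y3 * ln (a2 + P2 / b2 * (1 - v2)) + y4 * (ln a2 + (ln lam1 + ln lam2 + ln v1 + ln v2))
    + y5 * (ln a1 + ln a2 + (ln lam1 + ln lam2 + ln v1 + ln v2))" for v1 v2
  have "\<mu>1 * R1 + (1 - \<mu>1) * R2 \<le> lagrangian v1 v2"
    unfolding lagrangian_def using y assms(5-7)
    by (intro pentagon_weak_duality) (simp_all add: kkt_multipliers_def)
  also have "lagrangian v1 v2 \<le> lagrangian v1_opt v2_opt"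
  proof -
    have "y1 * ln (a1 + P1 / b1 * (1 - v1)) + W * ln v1
        \<le> y1 * ln (a1 + P1 / b1 * (1 - v1_opt)) + W * ln v1_opt"
      using opt_ratio_maximizes[OF pos(1,3,5) lam(1)] y assms(1,2)
      by (simp add: kkt_multipliers_def W_def v1_opt_def)
    moreover have "y3 * ln (a2 + P2 / b2 * (1 - v2)) + W * ln v2
        \<le> y3 * ln (a2 + P2 / b2 * (1 - v2_opt)) + W * ln v2_opt"
      using opt_ratio_maximizes[OF pos(2,4,6) lam(2)] y assms(3,4)
      by (simp add: kkt_multipliers_def W_def v2_opt_def)
    ultimately show ?thesis by (simp add: lagrangian_def W_def algebra_simps)
  qed
  also have "lagrangian v1_opt v2_opt = (y1 + y2 + y5) * (ln a1 + ln lam1 + ln v1_opt)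
      + (y3 + y4 + y5) * (ln a2 + ln lam2 + ln v2_opt)
      + y2 * (ln lam2 + ln v2_opt) + y4 * (ln lam1 + ln v1_opt)"
    unfolding lagrangian_def ln_relay_gain_v_opt by (simp add: algebra_simps)
  also have "\<dots> = opt_value"
  proof -
    have "y1 + y2 + y5 = \<mu>1" "y3 + y4 + y5 = 1 - \<mu>1"
      using y by (simp_all add: kkt_multipliers_def)
    moreover have "y2 * (ln lam2 + ln v2_opt) = 0" "y4 * (ln lam1 + ln v1_opt) = 0"
      using y v_opt_bounds by (auto simp: kkt_multipliers_def v1_opt_def v2_opt_def opt_ratio_def)
    ultimately show ?thesis by (simp only: opt_value_def)
  qed
  finally show ?thesis .
qed

lemma rate_le_opt_value:
  assumes "0 < v1" "v1 \<le> 1" "0 < v2" "v2 \<le> 1"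
  shows "rate v1 v2 \<le> ereal opt_value"
  unfolding rate_def by (rule wsr_value_le) (rule feasible_rates_le_opt_value[OF assms])

text \<open>Shrinking both ratios by \<open>t\<close> keeps \<open>v\<close> inside \<open>(0, 1)\<^sup>2\<close> (finite \<open>Q\<close>) even when the
  optimum has \<open>v\<^sub>k = 1\<close>, at a cost of \<open>2 ln t\<close> in the objective.\<close>

lemma rate_scaled_ge:
  assumes "0 < t" "t \<le> 1"
  shows "ereal (opt_value + 2 * ln t) \<le> rate (t * v1_opt) (t * v2_opt)"
proof -
  have "t * v1_opt \<le> v1_opt" "t * v2_opt \<le> v2_opt"
    using assms v_opt_bounds by (simp_all add: mult_left_le_one_le)
  then have "a1 + P1 / b1 * (1 - v1_opt) \<le> a1 + P1 / b1 * (1 - t * v1_opt)"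
    "a2 + P2 / b2 * (1 - v2_opt) \<le> a2 + P2 / b2 * (1 - t * v2_opt)"
    using pos by (intro add_left_mono mult_left_mono; simp)+
  moreover have "0 < a1 + P1 / b1 * (1 - v1_opt)" "0 < a2 + P2 / b2 * (1 - v2_opt)"
    using pos v_opt_bounds by (simp_all add: add_pos_nonneg)
  ultimately have gain: "ln a1 + ln lam1 + ln v1_opt \<le> ln (a1 + P1 / b1 * (1 - t * v1_opt))"
    "ln a2 + ln lam2 + ln v2_opt \<le> ln (a2 + P2 / b2 * (1 - t * v2_opt))"
    by (simp_all flip: ln_relay_gain_v_opt)
  define R1 where "R1 = ln a1 + ln lam1 + ln v1_opt + 2 * ln t"
  define R2 where "R2 = ln a2 + ln lam2 + ln v2_opt + 2 * ln t"
  have "ln (t * v1_opt) = ln t + ln v1_opt" "ln (t * v2_opt) = ln t + ln v2_opt" "ln t \<le> 0"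
    using assms v_opt_bounds by (simp_all add: ln_mult)
  then have "R1 \<le> min (ln (a1 + P1 / b1 * (1 - t * v1_opt)))
                 (ln a1 + (ln lam1 + ln lam2 + ln (t * v1_opt) + ln (t * v2_opt)))"
    "R2 \<le> min (ln (a2 + P2 / b2 * (1 - t * v2_opt)))
                 (ln a2 + (ln lam1 + ln lam2 + ln (t * v1_opt) + ln (t * v2_opt)))"
    "R1 + R2 \<le> ln a1 + ln a2 + (ln lam1 + ln lam2 + ln (t * v1_opt) + ln (t * v2_opt))"
    unfolding min.bounded_iff R1_def R2_def using gain ln_slack_nonneg by auto
  then have "ereal (\<mu>1 * R1 + (1 - \<mu>1) * R2) \<le> rate (t * v1_opt) (t * v2_opt)"
    unfolding rate_def by (rule wsr_value_ge)
  moreover have "\<mu>1 * R1 + (1 - \<mu>1) * R2 = opt_value + 2 * ln t"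
    by (simp add: R1_def R2_def opt_value_def algebra_simps)
  ultimately show ?thesis by simp
qed

lemma rate_v_opt: "rate v1_opt v2_opt = ereal opt_value"
  using rate_le_opt_value[of v1_opt v2_opt] rate_scaled_ge[of 1] v_opt_bounds by simp

lemma SUP_rate_open: "(SUP v \<in> {0<..<1} \<times> {0<..<1}. rate (fst v) (snd v)) = ereal opt_value"
  (is "?S = _")
proof (rule antisym)
  show "?S \<le> ereal opt_value"
    by (rule SUP_least) (auto intro: rate_le_opt_value)
  show "ereal opt_value \<le> ?S"
  proof (rule ereal_le_epsilon2)
    fix e :: real assume "0 < e"
    define t where "t = exp (- e / 2)"
    have "0 < t" "t < 1" using \<open>0 < e\<close> by (simp_all add: t_def)
    have "t * v1_opt < 1"
      by (rule order.strict_trans2[OF _ v_opt_bounds(2)]) (use \<open>t < 1\<close> v_opt_bounds in simp)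
    moreover have "t * v2_opt < 1"
      by (rule order.strict_trans2[OF _ v_opt_bounds(5)]) (use \<open>t < 1\<close> v_opt_bounds in simp)
    ultimately have "(t * v1_opt, t * v2_opt) \<in> {0<..<1} \<times> {0<..<1}"
      using \<open>0 < t\<close> v_opt_bounds by simp
    then have "rate (t * v1_opt) (t * v2_opt) \<le> ?S"
      using SUP_upper[of "(t * v1_opt, t * v2_opt)" _ "\<lambda>v. rate (fst v) (snd v)"] by simp
    moreover have "ereal (opt_value - e) \<le> rate (t * v1_opt) (t * v2_opt)"
      using rate_scaled_ge[of t] \<open>0 < t\<close> \<open>t < 1\<close> by (simp add: t_def)
    ultimately have "ereal (opt_value - e) + ereal e \<le> ?S + ereal e"
      by (intro add_right_mono) simp
    then show "ereal opt_value \<le> ?S + ereal e" by simp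
  qed
qed

lemma SUP_rate_quant_ratio:
  "(SUP Q \<in> {0<..} \<times> {0<..}. rate (quant_ratio b1 (ereal (fst Q))) (quant_ratio b2 (ereal (snd Q))))
     = ereal opt_value"
proof -
  define ratios where
    "ratios = map_prod (\<lambda>q. quant_ratio b1 (ereal q)) (\<lambda>q. quant_ratio b2 (ereal q))"
  have "ratios ` ({0<..} \<times> {0<..}) = {0<..<1} \<times> {0<..<1}"
    unfolding ratios_def using pos(3,4) by (intro map_prod_surj_on quant_ratio_image)
  moreover have "(\<lambda>v. rate (fst v) (snd v)) ` ratios ` ({0<..} \<times> {0<..})
      = (\<lambda>Q. rate (quant_ratio b1 (ereal (fst Q))) (quant_ratio b2 (ereal (snd Q))))
          ` ({0<..} \<times> {0<..})"
    unfolding image_image ratios_def by (simp add: map_prod_def case_prod_beta)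
  ultimately show ?thesis using SUP_rate_open by metis
qed

end

lemma qf_rate_problem_lambda1_star:
  fixes M N :: nat and P1 P2 Pr dd1 dd2 dr1 dr2 ddr \<alpha> \<mu>1 :: real
  assumes "1 \<le> N" "N < M" "0 < P1" "0 < P2" "0 < Pr"
    and "0 < dd1" "0 < dd2" "0 < dr1" "0 < dr2" "0 < ddr" "0 \<le> \<mu>1" "\<mu>1 \<le> 1"
  defines "a1 \<equiv> 1 + P1 * (real M - real N) / dd1 powr \<alpha>"
    and "a2 \<equiv> 1 + P2 * (real M - real N) / dd2 powr \<alpha>"
    and "b1 \<equiv> dr1 powr \<alpha> / real N" and "b2 \<equiv> dr2 powr \<alpha> / real N"
    and "lam1 \<equiv> lambda1_star M N P1 P2 Pr dd1 dd2 dr1 dr2 ddr \<alpha> \<mu>1"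
    and "lam2 \<equiv>
      lambda_s M N Pr ddr \<alpha> / lambda1_star M N P1 P2 Pr dd1 dd2 dr1 dr2 ddr \<alpha> \<mu>1"
  shows "qf_rate_problem a1 a2 b1 b2 P1 P2 lam1 lam2 \<mu>1"
    and "real N * Cf (Pr * (real M - real N) / (real N * ddr powr \<alpha>)) = ln lam1 + ln lam2"
proof -
  define snr where "snr = Pr * (real M - real N) / (real N * ddr powr \<alpha>)"
  define lams where "lams = lambda_s M N Pr ddr \<alpha>"
  have pos: "0 < a1" "0 < a2" "0 < b1" "0 < b2" "0 < snr"
    using assms by (simp_all add: snr_def add_pos_pos)
  have lams: "lams = (1 + snr) ^ N" by (simp add: lams_def lambda_s_def snr_def)
  then have "1 \<le> lams" using pos by simp
  have "lam1 = (if (1 - \<mu>1) * P2 * b1 * a1 = 0 then lams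
      else min (max (inverse (2 * ((1 - \<mu>1) * P2 * b1 * a1)) * ((\<mu>1 - (1 - \<mu>1)) * P1 * P2
        + sqrt (((\<mu>1 - (1 - \<mu>1)) * P1 * P2)\<^sup>2
                - 4 * ((1 - \<mu>1) * P2 * b1 * a1) * (- \<mu>1 * P1 * b2 * a2 * lams)))) 1) lams)"
    unfolding assms(13-17) lambda1_star_def Let_def lams_def lambda_s_def ..
  note lam1 = kkt_balanced_clamped_root[OF pos(1-4) assms(3,4) \<open>1 \<le> lams\<close> assms(11,12)
      refl refl refl this]
  then show "qf_rate_problem a1 a2 b1 b2 P1 P2 lam1 lam2 \<mu>1"
    using pos assms(3,4,11,12) by unfold_locales (auto simp: lam2_def lams_def simp flip: lam1_def)
  show "real N * Cf snr = ln lam1 + ln lam2"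
    using pos lam1(1) \<open>1 \<le> lams\<close>
    by (simp add: lam2_def flip: lam1_def lams_def) (simp add: Cf_def ln_div lams ln_realpow)
qed

theorem theorem2:
  fixes M N :: nat
    and P1 P2 Pr dd1 dd2 dr1 dr2 ddr \<alpha> \<mu>1 :: real
  assumes "1 \<le> N" and "N < M"
    and "0 < P1" and "0 < P2" and "0 < Pr"
    and "0 < dd1" and "0 < dd2" and "0 < dr1" and "0 < dr2" and "0 < ddr" and "0 < \<alpha>"
    and "0 \<le> \<mu>1" and "\<mu>1 \<le> 1"
  shows "(let lam1 = lambda1_star M N P1 P2 Pr dd1 dd2 dr1 dr2 ddr \<alpha> \<mu>1;
              lam2 = lambda_s M N Pr ddr \<alpha> / lam1
          in qf_value M N P1 P2 Pr dd1 dd2 dr1 dr2 ddr \<alpha> \<mu>1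
               (Q_star M N P1 dd1 dr1 \<alpha> lam1) (Q_star M N P2 dd2 dr2 \<alpha> lam2))
       = (SUP Q \<in> {0<..} \<times> {0<..}.
            qf_value M N P1 P2 Pr dd1 dd2 dr1 dr2 ddr \<alpha> \<mu>1 (ereal (fst Q)) (ereal (snd Q)))"
proof -
  define a1 where "a1 = 1 + P1 * (real M - real N) / dd1 powr \<alpha>"
  define a2 where "a2 = 1 + P2 * (real M - real N) / dd2 powr \<alpha>"
  define b1 where "b1 = dr1 powr \<alpha> / real N"
  define b2 where "b2 = dr2 powr \<alpha> / real N"
  define lam1 where "lam1 = lambda1_star M N P1 P2 Pr dd1 dd2 dr1 dr2 ddr \<alpha> \<mu>1"
  define lam2 where "lam2 = lambda_s M N Pr ddr \<alpha> / lam1"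
  have problem: "qf_rate_problem a1 a2 b1 b2 P1 P2 lam1 lam2 \<mu>1"
    "real N * Cf (Pr * (real M - real N) / (real N * ddr powr \<alpha>)) = ln lam1 + ln lam2"
    unfolding a1_def a2_def b1_def b2_def lam2_def lam1_def
    by (rule qf_rate_problem_lambda1_star[OF assms(1-10,12,13)])+
  interpret qf: qf_rate_problem a1 a2 b1 b2 P1 P2 lam1 lam2 \<mu>1 by (fact problem(1))
  have qf_value_rate: "qf_value M N P1 P2 Pr dd1 dd2 dr1 dr2 ddr \<alpha> \<mu>1 Q1 Q2
      = qf.rate (quant_ratio b1 Q1) (quant_ratio b2 Q2)" if "0 < Q1" "0 < Q2" for Q1 Q2
    using qf_value_eq_wsr_value[OF assms(1,8,9) that a1_def a2_def b1_def b2_def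
        problem(2)[symmetric] refl refl]
    by (simp add: qf.rate_def)
  have "0 < Q_star M N P1 dd1 dr1 \<alpha> lam1" "0 < Q_star M N P2 dd2 dr2 \<alpha> lam2"
    "quant_ratio b1 (Q_star M N P1 dd1 dr1 \<alpha> lam1) = qf.v1_opt"
    "quant_ratio b2 (Q_star M N P2 dd2 dr2 \<alpha> lam2) = qf.v2_opt"
    using Q_star_quant_ratio[OF qf.pos(1,3,5) qf.lam(1) a1_def b1_def]
      Q_star_quant_ratio[OF qf.pos(2,4,6) qf.lam(2) a2_def b2_def]
    by (simp_all add: qf.v1_opt_def qf.v2_opt_def)
  moreover have "(SUP Q \<in> {0<..} \<times> {0<..}.
      qf_value M N P1 P2 Pr dd1 dd2 dr1 dr2 ddr \<alpha> \<mu>1 (ereal (fst Q)) (ereal (snd Q)))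
      = ereal qf.opt_value"
    unfolding qf.SUP_rate_quant_ratio[symmetric] by (rule SUP_cong) (auto simp: qf_value_rate)
  ultimately show ?thesis
    using qf.rate_v_opt by (simp add: Let_def qf_value_rate flip: lam1_def lam2_def)
qed

end
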